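(* Consider the two-observation Lewis signaling game with observations $o_1,o_2$ (each occurring with probability $p(o_1)=p(o_2)=\tfrac12$), messages $m_1,m_2$, actions $a_1,a_2$, and reward $R(o_i,a_j)=1$ if $i=j$ and $R(o_i,a_j)=0$ if $i\neq j$. An instructor with parameter $S\in[0,1]$ sends message $m_j$ on observation $o_i$ with probability $\pi_S(m_j\mid o_i)=S$ if $i=j$ and $1-S$ otherwise; an executor with parameter $L\in[0,1]$ takes action $a_j$ on message $m_i$ with probability $\pi_L(a_j\mid m_i)=L$ if $i=j$ and $1-L$ otherwise. The expected reward is $$J(S,L)=\sum_{o,m,a}p(o)\,\pi_S(m\mid o)\,\pi_L(a\mid m)\,R(o,a)=\tfrac12 SL+\tfrac12(1-S)(1-L),$$ so that $\partial J/\partial S=L-\tfrac12$ and $\partial J/\partial L=S-\tfrac12$. Let $(S(t),L(t))_{t\ge 0}$ evolve by the clipped gradient flow: $\frac{dS}{dt}=L-\tfrac12$ and $\frac{dL}{dt}=S-\tfrac12$, except that the derivative of a parameter is set to $0$ whenever that parameter equals $0$ or $1$. Suppose the initial values satisfy $S(0),L(0)\in(0,1)$ and $L(0)+S(0)<1$. Then the agents undergo semantic drift: $L(t)$ converges to $0$ as $t\to\infty$.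
   Context: Messages are thought of as natural-language commands ($m_i$ means "do $a_i$"), so an executor with $L>\tfrac12$ respects the natural-language meaning. An initialization $(S(0),L(0))$ is said to undergo executor semantic drift if, after training, $L<\tfrac12$. *)

theory Defs
  imports "HOL-Analysis.Analysis"
begin

definition reward :: "nat \<Rightarrow> nat \<Rightarrow> real" where
  "reward i j = (if i = j then 1 else 0)"

definition instructor :: "real \<Rightarrow> nat \<Rightarrow> nat \<Rightarrow> real" where
  "instructor S i j = (if i = j then S else 1 - S)"

definition executor :: "real \<Rightarrow> nat \<Rightarrow> nat \<Rightarrow> real" where
  "executor L i j = (if i = j then L else 1 - L)"

definition J :: "real \<Rightarrow> real \<Rightarrow> real" where
  "J S L = (\<Sum>ob\<in>{1,2::nat}. \<Sum>m\<in>{1,2::nat}. \<Sum>a\<in>{1,2::nat}.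
              (1/2) * instructor S ob m * executor L m a * reward ob a)"

text \<open>Clipped gradient flow on t \<ge> 0: dS/dt = dJ/dS = L - 1/2, dL/dt = dJ/dL = S - 1/2,
  with the derivative of a parameter set to 0 whenever that parameter is 0 or 1.
  Since clipping makes the velocity field discontinuous, derivatives are taken as
  right derivatives (forward-time evolution), together with continuity on [0,\<infinity>).\<close>

definition clipped_flow :: "(real \<Rightarrow> real) \<Rightarrow> (real \<Rightarrow> real) \<Rightarrow> bool" where
  "clipped_flow S L \<longleftrightarrow>
     continuous_on {0..} S \<and> continuous_on {0..} L \<and>
     (\<forall>t\<ge>0. S t \<in> {0..1} \<and> L t \<in> {0..1} \<and>
        (S has_real_derivative (if S t = 0 \<or> S t = 1 then 0 else L t - 1/2)) (at t within {t..}) \<and>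
        (L has_real_derivative (if L t = 0 \<or> L t = 1 then 0 else S t - 1/2)) (at t within {t..}))"

end

theory Submission
  imports Defs
begin

text \<open>Track the sum \<open>w = S + L\<close>. Below the anti-diagonal \<open>S + L < 1\<close> the clipped velocity of \<open>w\<close>
  is never positive, so \<open>w\<close> is nonincreasing and the region stays invariant; as long as \<open>w\<close> is
  positive its velocity is even bounded above by \<open>-min (1 - w 0) (1/2)\<close>, so \<open>w\<close> tends to 0,
  and with it \<open>L\<close>, since \<open>0 \<le> L \<le> w\<close>. The velocity field is discontinuous, so only right
  derivatives are available; all comparison arguments rest on a first-crossing argument
  for such derivatives.\<close>

lemma eventually_nonpos_at_right:
  fixes \<phi> :: "real \<Rightarrow> real"
  assumes cont: "(\<phi> \<longlongrightarrow> \<phi> x) (at_right x)" and nonpos: "\<phi> x \<le> 0"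
    and deriv: "\<phi> x = 0 \<Longrightarrow> \<exists>D<0. (\<phi> has_real_derivative D) (at x within {x..})"
  shows "eventually (\<lambda>t. \<phi> t \<le> 0) (at_right x)"
proof (cases "\<phi> x = 0")
  case True
  then obtain D where "D < 0" and "(\<phi> has_real_derivative D) (at x within {x..})"
    using deriv by blast
  then have "((\<lambda>t. (\<phi> t - \<phi> x) / (t - x)) \<longlongrightarrow> D) (at_right x)"
    by (simp add: has_field_derivative_iff at_within_Ici_at_right)
  then have "eventually (\<lambda>t. (\<phi> t - \<phi> x) / (t - x) < 0) (at_right x)"
    using \<open>D < 0\<close> by (rule order_tendstoD)
  with eventually_at_right_less show ?thesis
    by eventually_elim (use True in \<open>simp add: divide_less_0_iff\<close>)
next
  case False
  with nonpos have "\<phi> x < 0" by simp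
  with cont have "eventually (\<lambda>t. \<phi> t < 0) (at_right x)" by (rule order_tendstoD)
  then show ?thesis by eventually_elim simp
qed

lemma nonpos_if_neg_right_deriv_at_zeros:
  fixes \<phi> :: "real \<Rightarrow> real"
  assumes "a \<le> b" and cont: "continuous_on {a..b} \<phi>" and "\<phi> a \<le> 0"
    and deriv: "\<And>t. a \<le> t \<Longrightarrow> t < b \<Longrightarrow> \<phi> t = 0 \<Longrightarrow>
                  \<exists>D<0. (\<phi> has_real_derivative D) (at t within {t..})"
  shows "\<phi> b \<le> 0"
proof (rule ccontr)
  assume "\<not> \<phi> b \<le> 0"
  define Z where "Z = {a..b} \<inter> \<phi> -` {..0}"
  have "closed Z" unfolding Z_def using cont by (intro continuous_closed_preimage) auto
  moreover have "a \<in> Z" using \<open>a \<le> b\<close> \<open>\<phi> a \<le> 0\<close> by (simp add: Z_def)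
  moreover have bdd: "bdd_above Z" unfolding Z_def by (rule bdd_aboveI[of _ b]) auto
  ultimately have "Sup Z \<in> Z" by (intro closed_contains_Sup) auto
  define T where "T = Sup Z"
  have T: "a \<le> T" "T < b" "\<phi> T \<le> 0"
    using \<open>Sup Z \<in> Z\<close> \<open>\<not> \<phi> b \<le> 0\<close> by (auto simp: Z_def T_def less_le)
  have pos: "\<phi> t > 0" if "T < t" "t \<le> b" for t
    using that T cSup_upper[OF _ bdd, of t] by (force simp: Z_def T_def)
  have "(\<phi> \<longlongrightarrow> \<phi> T) (at_right T)"
    using continuous_on_subset[OF cont, of "{T..b}"] T by (intro continuous_on_Icc_at_rightD) auto
  then have "eventually (\<lambda>t. \<phi> t \<le> 0) (at_right T)"
    using T deriv by (intro eventually_nonpos_at_right) auto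
  moreover have "eventually (\<lambda>t. T < t \<and> t \<le> b) (at_right T)"
    using \<open>T < b\<close> by (auto simp: eventually_at_right)
  ultimately have "eventually (\<lambda>_. False) (at_right T)"
    by eventually_elim (use pos in force)
  then show False by (simp add: trivial_limit_at_right_real)
qed

lemma le_line_if_right_deriv_less_on_line:
  fixes f f' :: "real \<Rightarrow> real"
  assumes "a \<le> b" and "continuous_on {a..b} f"
    and "\<And>t. a \<le> t \<Longrightarrow> t < b \<Longrightarrow> (f has_real_derivative f' t) (at t within {t..})"
    and "\<And>t. a \<le> t \<Longrightarrow> t < b \<Longrightarrow> f t = f a + c * (t - a) \<Longrightarrow> f' t < c"
  shows "f b \<le> f a + c * (b - a)"
proof -
  have "(\<lambda>t. f t - f a - c * (t - a)) b \<le> 0"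
  proof (rule nonpos_if_neg_right_deriv_at_zeros[where \<phi> = "\<lambda>t. f t - f a - c * (t - a)"])
    show "continuous_on {a..b} (\<lambda>t. f t - f a - c * (t - a))"
      using assms(2) by (intro continuous_intros)
    fix t assume t: "a \<le> t" "t < b" "f t - f a - c * (t - a) = 0"
    have "((\<lambda>t. f t - f a - c * (t - a)) has_real_derivative f' t - c) (at t within {t..})"
      using assms(3)[OF t(1,2)] by (auto intro!: derivative_eq_intros)
    moreover have "f' t - c < 0" using assms(4)[OF t(1,2)] t(3) by simp
    ultimately show "\<exists>D<0. ((\<lambda>t. f t - f a - c * (t - a)) has_real_derivative D) (at t within {t..})"
      by blast
  qed (use assms(1) in auto)
  then show ?thesis by simp
qed

lemma le_if_right_deriv_le:
  fixes f f' :: "real \<Rightarrow> real"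
  assumes "a \<le> b" and "continuous_on {a..b} f"
    and deriv: "\<And>t. a \<le> t \<Longrightarrow> t < b \<Longrightarrow> (f has_real_derivative f' t) (at t within {t..})"
    and bound: "\<And>t. a \<le> t \<Longrightarrow> t < b \<Longrightarrow> f' t \<le> K"
  shows "f b \<le> f a + K * (b - a)"
proof (rule field_le_epsilon)
  fix e :: real assume "0 < e"
  define \<delta> where "\<delta> = e / (b - a + 1)"
  have "\<delta> > 0" and "\<delta> * (b - a) \<le> e"
    using \<open>0 < e\<close> \<open>a \<le> b\<close> by (auto simp: \<delta>_def field_simps)
  have "f b \<le> f a + (K + \<delta>) * (b - a)"
    using assms(1,2) deriv
  proof (rule le_line_if_right_deriv_less_on_line)
    fix t assume "a \<le> t" "t < b"
    then show "f' t < K + \<delta>" using bound[of t] \<open>\<delta> > 0\<close> by linarith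
  qed
  with \<open>\<delta> * (b - a) \<le> e\<close> show "f b \<le> f a + K * (b - a) + e"
    by (simp add: algebra_simps)
qed

lemma le_if_right_deriv_nonpos_below:
  fixes f f' :: "real \<Rightarrow> real"
  assumes "a \<le> b" and "continuous_on {a..b} f" and "f a < M"
    and deriv: "\<And>t. a \<le> t \<Longrightarrow> t < b \<Longrightarrow> (f has_real_derivative f' t) (at t within {t..})"
    and nonpos: "\<And>t. a \<le> t \<Longrightarrow> t < b \<Longrightarrow> f t < M \<Longrightarrow> f' t \<le> 0"
  shows "f b \<le> f a"
proof (rule field_le_epsilon)
  fix e :: real assume "0 < e"
  define m where "m = min e (M - f a)"
  define \<delta> where "\<delta> = m / (b - a + 1)"
  have "m > 0" "m \<le> e" "m \<le> M - f a" using \<open>0 < e\<close> \<open>f a < M\<close> by (simp_all add: m_def)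
  then have "\<delta> > 0" and small: "\<delta> * (b - a) < m"
    using \<open>a \<le> b\<close> by (auto simp: \<delta>_def field_simps)
  have "f b \<le> f a + \<delta> * (b - a)"
    using assms(1,2) deriv
  proof (rule le_line_if_right_deriv_less_on_line)
    fix t assume t: "a \<le> t" "t < b" "f t = f a + \<delta> * (t - a)"
    have "\<delta> * (t - a) \<le> \<delta> * (b - a)" using t \<open>\<delta> > 0\<close> by simp
    with t small \<open>m \<le> M - f a\<close> have "f t < M" by linarith
    with nonpos[OF t(1,2)] \<open>\<delta> > 0\<close> show "f' t < \<delta>" by simp
  qed
  with small \<open>m \<le> e\<close> show "f b \<le> f a + e" by linarith
qed

definition clipped_velocity :: "real \<Rightarrow> real \<Rightarrow> real" where
  "clipped_velocity x v = (if x = 0 \<or> x = 1 then 0 else v)"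

lemma clipped_velocity_sum_nonpos:
  assumes "s \<in> {0..1}" "l \<in> {0..1}" "s + l < 1"
  shows "clipped_velocity s (l - 1/2) + clipped_velocity l (s - 1/2) \<le> 0"
  using assms by (auto simp: clipped_velocity_def)

lemma clipped_velocity_sum_le:
  assumes "s \<in> {0..1}" "l \<in> {0..1}" "0 < s + l" "s + l \<le> c" "c < 1"
  shows "clipped_velocity s (l - 1/2) + clipped_velocity l (s - 1/2) \<le> - min (1 - c) (1/2)"
  using assms by (auto simp: clipped_velocity_def min_def)

lemma clipped_flow_range:
  assumes "clipped_flow S L" "0 \<le> t"
  shows "S t \<in> {0..1}" "L t \<in> {0..1}"
  using assms unfolding clipped_flow_def by blast+

lemma clipped_flow_sum_right_deriv:
  assumes "clipped_flow S L" "0 \<le> t"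
  shows "((\<lambda>t. S t + L t) has_real_derivative
           clipped_velocity (S t) (L t - 1/2) + clipped_velocity (L t) (S t - 1/2)) (at t within {t..})"
  using assms unfolding clipped_flow_def clipped_velocity_def by (blast intro: DERIV_add)

lemma clipped_flow_sum_continuous:
  assumes "clipped_flow S L" "0 \<le> a"
  shows "continuous_on {a..b} (\<lambda>t. S t + L t)"
proof -
  have "{a..b} \<subseteq> {0..}" using \<open>0 \<le> a\<close> by auto
  then show ?thesis
    using assms(1) unfolding clipped_flow_def by (blast intro: continuous_on_add continuous_on_subset)
qed

lemma clipped_flow_sum_antimono:
  assumes flow: "clipped_flow S L" and "S 0 + L 0 < 1" and "0 \<le> s" "s \<le> t"
  shows "S t + L t \<le> S s + L s"
proof -
  have step: "S v + L v \<le> S u + L u" if "0 \<le> u" "u \<le> v" "S u + L u < 1" for u v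
    using \<open>u \<le> v\<close> clipped_flow_sum_continuous[OF flow \<open>0 \<le> u\<close>] \<open>S u + L u < 1\<close>
  proof (rule le_if_right_deriv_nonpos_below[where f = "\<lambda>t. S t + L t"])
    fix x assume "u \<le> x" "x < v"
    then have "0 \<le> x" using \<open>0 \<le> u\<close> by simp
    with flow show "((\<lambda>t. S t + L t) has_real_derivative
        clipped_velocity (S x) (L x - 1/2) + clipped_velocity (L x) (S x - 1/2)) (at x within {x..})"
      by (rule clipped_flow_sum_right_deriv)
    show "S x + L x < 1 \<Longrightarrow> clipped_velocity (S x) (L x - 1/2) + clipped_velocity (L x) (S x - 1/2) \<le> 0"
      using clipped_flow_range[OF flow \<open>0 \<le> x\<close>] by (rule clipped_velocity_sum_nonpos)
  qed
  have "S s + L s < 1" using step[of 0 s] assms by linarith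
  then show ?thesis using step \<open>0 \<le> s\<close> \<open>s \<le> t\<close> by blast
qed

lemma clipped_flow_sum_tendsto_0:
  assumes flow: "clipped_flow S L" and below: "S 0 + L 0 < 1"
  shows "((\<lambda>t. S t + L t) \<longlongrightarrow> 0) at_top"
proof -
  define w where "w = (\<lambda>t. S t + L t)"
  have nonneg: "0 \<le> w t" if "0 \<le> t" for t
    using clipped_flow_range[OF flow that] by (simp add: w_def)
  have antimono: "w t \<le> w s" if "0 \<le> s" "s \<le> t" for s t
    using clipped_flow_sum_antimono[OF flow below that] by (simp add: w_def)
  have reaches: "\<exists>t\<ge>0. w t < \<eta>" if "0 < \<eta>" for \<eta>
  proof (rule ccontr)
    assume "\<not> ?thesis"
    then have large: "\<eta> \<le> w t" if "0 \<le> t" for t using that by force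
    define \<delta> where "\<delta> = min (1 - w 0) (1/2)"
    define T where "T = w 0 / \<delta>"
    have "\<delta> > 0" using below by (simp add: \<delta>_def w_def)
    then have "0 \<le> T" using nonneg[of 0] by (simp add: T_def)
    have "w T \<le> w 0 + (- \<delta>) * (T - 0)"
    proof (rule le_if_right_deriv_le[where f = w])
      show "continuous_on {0..T} w"
        unfolding w_def by (rule clipped_flow_sum_continuous[OF flow]) simp
      fix t assume t: "0 \<le> t" "t < T"
      show "(w has_real_derivative
          clipped_velocity (S t) (L t - 1/2) + clipped_velocity (L t) (S t - 1/2)) (at t within {t..})"
        unfolding w_def using flow t(1) by (rule clipped_flow_sum_right_deriv)
      have "0 < S t + L t" "S t + L t \<le> w 0"
        using large[OF t(1)] \<open>0 < \<eta>\<close> antimono[of 0 t] t by (auto simp: w_def)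
      then show "clipped_velocity (S t) (L t - 1/2) + clipped_velocity (L t) (S t - 1/2) \<le> - \<delta>"
        unfolding \<delta>_def using clipped_flow_range[OF flow t(1)] below
        by (intro clipped_velocity_sum_le) (simp_all add: w_def)
    qed (fact \<open>0 \<le> T\<close>)
    also have "\<dots> = 0" using \<open>\<delta> > 0\<close> by (simp add: T_def)
    finally show False using large[OF \<open>0 \<le> T\<close>] \<open>0 < \<eta>\<close> by simp
  qed
  show ?thesis
    unfolding w_def[symmetric]
  proof (rule order_tendstoI)
    fix \<eta> :: real assume "0 < \<eta>"
    then obtain t\<^sub>0 where "0 \<le> t\<^sub>0" "w t\<^sub>0 < \<eta>" using reaches by blast
    then show "eventually (\<lambda>t. w t < \<eta>) at_top"
      using antimono unfolding eventually_at_top_linorder by (meson le_less_trans)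
  next
    fix \<eta> :: real assume "\<eta> < 0"
    show "eventually (\<lambda>t. \<eta> < w t) at_top"
      using eventually_ge_at_top[of 0] by eventually_elim (use nonneg \<open>\<eta> < 0\<close> in force)
  qed
qed

theorem proposition1:
  fixes S L :: "real \<Rightarrow> real"
  assumes "clipped_flow S L"
    and "S 0 \<in> {0<..<1}" and "L 0 \<in> {0<..<1}"
    and "L 0 + S 0 < 1"
  shows "(L \<longlongrightarrow> 0) at_top"
proof (rule tendsto_sandwich)
  have "eventually (\<lambda>t. S t \<in> {0..1} \<and> L t \<in> {0..1}) at_top"
    using eventually_ge_at_top[of 0] by eventually_elim (use clipped_flow_range[OF assms(1)] in blast)
  then show "eventually (\<lambda>t. 0 \<le> L t) at_top" "eventually (\<lambda>t. L t \<le> S t + L t) at_top"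
    by (auto elim: eventually_mono)
  show "((\<lambda>t. S t + L t) \<longlongrightarrow> 0) at_top"
    using assms(1,4) by (intro clipped_flow_sum_tendsto_0) simp_all
qed simp

end
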